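(* For any finite graph $G$, if the VC-dimension of $\mathcal{B}(G)$ is at least $3$, then the VC-dimension of $\mathcal{B}(G)$ is at most $\nu_{\mathrm{bi}}(G)$.
   Context: $\mathrm{MIS}(G)$ is the set of maximal independent sets of $G$; $\mathcal{B}(G)=\{K_v: v\in V(G)\}$ with $K_v=\{I\in\mathrm{MIS}(G): v\in I\}$, a set system on ground set $\mathrm{MIS}(G)$. The VC-dimension of a set system $\mathcal{F}$ on ground set $X$ is the largest $d$ such that some $S\subseteq X$ with $|S|=d$ satisfies: for every $B\subseteq S$ there is $A\in\mathcal{F}$ with $A\cap S=B$. $\nu_{\mathrm{bi}}(G)$ is the largest $t$ such that $G$ has $2t$ distinct vertices $u_1,\dots,u_t,v_1,\dots,v_t$ with $u_iv_j\in E(G)$ iff $i=j$. *)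

theory Defs
  imports Main
begin

definition fin_graph :: "'a set \<Rightarrow> ('a \<Rightarrow> 'a \<Rightarrow> bool) \<Rightarrow> bool" where
  "fin_graph V E \<longleftrightarrow> finite V \<and> (\<forall>x y. E x y \<longrightarrow> E y x) \<and> (\<forall>x. \<not> E x x)
     \<and> (\<forall>x y. E x y \<longrightarrow> x \<in> V \<and> y \<in> V)"

definition indep_set :: "'a set \<Rightarrow> ('a \<Rightarrow> 'a \<Rightarrow> bool) \<Rightarrow> 'a set \<Rightarrow> bool" where
  "indep_set V E I \<longleftrightarrow> I \<subseteq> V \<and> (\<forall>x\<in>I. \<forall>y\<in>I. \<not> E x y)"

definition max_indep_set :: "'a set \<Rightarrow> ('a \<Rightarrow> 'a \<Rightarrow> bool) \<Rightarrow> 'a set \<Rightarrow> bool" where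
  "max_indep_set V E I \<longleftrightarrow> indep_set V E I \<and> (\<forall>x\<in>V - I. \<not> indep_set V E (insert x I))"

definition MIS :: "'a set \<Rightarrow> ('a \<Rightarrow> 'a \<Rightarrow> bool) \<Rightarrow> 'a set set" where
  "MIS V E = {I. max_indep_set V E I}"

definition Kv :: "'a set \<Rightarrow> ('a \<Rightarrow> 'a \<Rightarrow> bool) \<Rightarrow> 'a \<Rightarrow> 'a set set" where
  "Kv V E v = {I \<in> MIS V E. v \<in> I}"

definition BG :: "'a set \<Rightarrow> ('a \<Rightarrow> 'a \<Rightarrow> bool) \<Rightarrow> 'a set set set" where
  "BG V E = Kv V E ` V"

definition shatters :: "'b set set \<Rightarrow> 'b set \<Rightarrow> bool" where
  "shatters F S \<longleftrightarrow> (\<forall>B\<subseteq>S. \<exists>A\<in>F. A \<inter> S = B)"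

text \<open>VC-dimension of a set system F on ground set X (largest size of a finite
shattered subset of X; Sup of an empty/unbounded nat set is 0).\<close>
definition vc_dim :: "'b set set \<Rightarrow> 'b set \<Rightarrow> nat" where
  "vc_dim F X = Sup {card S | S. S \<subseteq> X \<and> finite S \<and> shatters F S}"

definition nu_bi :: "'a set \<Rightarrow> ('a \<Rightarrow> 'a \<Rightarrow> bool) \<Rightarrow> nat" where
  "nu_bi V E = Sup {t. \<exists>u v :: nat \<Rightarrow> 'a.
      (\<forall>i<t. u i \<in> V \<and> v i \<in> V) \<and>
      inj_on u {..<t} \<and> inj_on v {..<t} \<and> u ` {..<t} \<inter> v ` {..<t} = {} \<and>
      (\<forall>i<t. \<forall>j<t. E (u i) (v j) \<longleftrightarrow> i = j)}"

end

theory Submission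
  imports Defs
begin

text \<open>Enumerate a shattered family \<open>I\<^sub>1, \<dots>, I\<^sub>d\<close> of maximal independent sets of
maximum size. Shattering the co-singleton \<open>{I\<^sub>j : j \<noteq> i}\<close> yields a vertex \<open>v\<^sub>i\<close> lying
in every \<open>I\<^sub>j\<close> except \<open>I\<^sub>i\<close>; by maximality of \<open>I\<^sub>i\<close> it has a neighbour \<open>u\<^sub>i \<in> I\<^sub>i\<close>.
For \<open>i \<noteq> j\<close> both \<open>u\<^sub>i\<close> and \<open>v\<^sub>j\<close> lie in the independent set \<open>I\<^sub>i\<close>, so \<open>u\<^sub>i v\<^sub>j\<close> is an
edge iff \<open>i = j\<close>. The membership patterns make the \<open>2d\<close> vertices distinct; separating
\<open>u\<^sub>i\<close> from \<open>v\<^sub>j\<close> needs a third index \<open>k \<notin> {i, j}\<close>, which is where \<open>d \<ge> 3\<close> enters.\<close>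

definition bi_induced_matching ::
    "'a set \<Rightarrow> ('a \<Rightarrow> 'a \<Rightarrow> bool) \<Rightarrow> nat \<Rightarrow> (nat \<Rightarrow> 'a) \<Rightarrow> (nat \<Rightarrow> 'a) \<Rightarrow> bool" where
  "bi_induced_matching V E t u v \<longleftrightarrow>
     (\<forall>i<t. u i \<in> V \<and> v i \<in> V) \<and>
     inj_on u {..<t} \<and> inj_on v {..<t} \<and> u ` {..<t} \<inter> v ` {..<t} = {} \<and>
     (\<forall>i<t. \<forall>j<t. E (u i) (v j) \<longleftrightarrow> i = j)"

lemma nu_bi_eq_Sup_bi_induced_matching:
  "nu_bi V E = Sup {t. \<exists>u v. bi_induced_matching V E t u v}"
  unfolding nu_bi_def bi_induced_matching_def ..

lemma bi_induced_matching_le_card: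
  assumes "finite V" and "bi_induced_matching V E t u v"
  shows "t \<le> card V"
proof -
  have "u ` {..<t} \<subseteq> V" and "inj_on u {..<t}"
    using assms(2) by (auto simp: bi_induced_matching_def)
  have "t = card (u ` {..<t})"
    using card_image[OF \<open>inj_on u {..<t}\<close>] by simp
  also have "\<dots> \<le> card V"
    using card_mono[OF assms(1) \<open>u ` {..<t} \<subseteq> V\<close>] .
  finally show ?thesis .
qed

lemma bi_induced_matching_le_nu_bi:
  assumes "finite V" and "bi_induced_matching V E t u v"
  shows "t \<le> nu_bi V E"
  unfolding nu_bi_eq_Sup_bi_induced_matching
proof (rule cSup_upper)
  show "t \<in> {t. \<exists>u v. bi_induced_matching V E t u v}"
    using assms(2) by blast
  show "bdd_above {t. \<exists>u v. bi_induced_matching V E t u v}"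
    using bi_induced_matching_le_card[OF assms(1)] by (auto intro!: bdd_aboveI[of _ "card V"])
qed

lemma vc_dim_attained:
  assumes "finite X" and "vc_dim F X \<noteq> 0"
  obtains S where "S \<subseteq> X" "finite S" "shatters F S" "card S = vc_dim F X"
proof -
  define C where "C = {card S | S. S \<subseteq> X \<and> finite S \<and> shatters F S}"
  have "C \<subseteq> {..card X}"
    using card_mono[OF assms(1)] by (auto simp: C_def)
  then have "finite C"
    by (rule finite_subset) simp
  have vc: "vc_dim F X = Sup C"
    unfolding vc_dim_def C_def ..
  with assms(2) have "C \<noteq> {}"
    by auto
  with \<open>finite C\<close> vc have "vc_dim F X \<in> C"
    by (simp add: Sup_nat_def)
  then show ?thesis
    using that by (auto simp: C_def)
qed

lemma finite_MIS: "finite V \<Longrightarrow> finite (MIS V E)"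
  by (rule finite_subset[of _ "Pow V"])
     (auto simp: MIS_def max_indep_set_def indep_set_def)

lemma max_indep_set_neighbour:
  assumes "fin_graph V E" and "max_indep_set V E I" and "x \<in> V" and "x \<notin> I"
  shows "\<exists>y\<in>I. E y x"
proof -
  have "\<not> indep_set V E (insert x I)" and I: "indep_set V E I"
    using assms(2-4) by (auto simp: max_indep_set_def)
  then obtain y z where "y \<in> insert x I" "z \<in> insert x I" "E y z"
    using assms(3) by (auto simp: indep_set_def)
  with I assms(1) show ?thesis
    unfolding indep_set_def fin_graph_def by blast
qed

lemma shatters_BG_co_singleton:
  assumes "shatters (BG V E) S" and "S \<subseteq> MIS V E" and "I \<in> S"
  shows "\<exists>x\<in>V. \<forall>J\<in>S. x \<in> J \<longleftrightarrow> J \<noteq> I"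
proof -
  obtain A where "A \<in> BG V E" and A: "A \<inter> S = S - {I}"
    using assms(1) unfolding shatters_def by (meson Diff_subset)
  then obtain x where "x \<in> V" and "A = Kv V E x"
    by (auto simp: BG_def)
  with A assms(2) have "\<forall>J\<in>S. x \<in> J \<longleftrightarrow> J \<noteq> I"
    by (auto simp: Kv_def)
  with \<open>x \<in> V\<close> show ?thesis ..
qed

lemma shatters_BG_co_singleton_vertices:
  assumes "shatters (BG V E) S" and "S \<subseteq> MIS V E" and "bij_betw I {..<d} S"
  obtains v where "\<And>i. i < d \<Longrightarrow> v i \<in> V" and "\<And>i j. i < d \<Longrightarrow> j < d \<Longrightarrow> v i \<in> I j \<longleftrightarrow> j \<noteq> i"
proof -
  have IS: "I j \<in> S" if "j < d" for j
    using assms(3) that by (auto simp: bij_betw_def)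
  have "\<forall>i\<in>{..<d}. \<exists>x. x \<in> V \<and> (\<forall>j<d. x \<in> I j \<longleftrightarrow> j \<noteq> i)"
  proof
    fix i assume "i \<in> {..<d}"
    then obtain x where "x \<in> V" and x: "\<forall>J\<in>S. x \<in> J \<longleftrightarrow> J \<noteq> I i"
      using shatters_BG_co_singleton[OF assms(1,2) IS] by auto
    have "I j \<noteq> I i \<longleftrightarrow> j \<noteq> i" if "j < d" for j
      using inj_on_eq_iff[OF bij_betw_imp_inj_on[OF assms(3)]] that \<open>i \<in> {..<d}\<close> by simp
    with x IS \<open>x \<in> V\<close> show "\<exists>x. x \<in> V \<and> (\<forall>j<d. x \<in> I j \<longleftrightarrow> j \<noteq> i)"
      by auto
  qed
  from bchoice[OF this] obtain v
    where "\<forall>i\<in>{..<d}. v i \<in> V \<and> (\<forall>j<d. v i \<in> I j \<longleftrightarrow> j \<noteq> i)" ..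
  then show ?thesis
    using that by blast
qed

lemma bi_induced_matching_from_co_singleton_vertices:
  assumes G: "fin_graph V E" and "3 \<le> d"
    and I: "\<And>i. i < d \<Longrightarrow> max_indep_set V E (I i)"
    and vV: "\<And>i. i < d \<Longrightarrow> v i \<in> V"
    and vI: "\<And>i j. i < d \<Longrightarrow> j < d \<Longrightarrow> v i \<in> I j \<longleftrightarrow> j \<noteq> i"
  shows "\<exists>u. bi_induced_matching V E d u v"
proof -
  have indep: "\<not> E x y" if "i < d" "x \<in> I i" "y \<in> I i" for i x y
    using I[OF that(1)] that(2,3) by (auto simp: max_indep_set_def indep_set_def)
  have "\<forall>i\<in>{..<d}. \<exists>w. w \<in> I i \<and> E w (v i)"
    using max_indep_set_neighbour[OF G I vV] vI by blast
  from bchoice[OF this] obtain u where "\<forall>i\<in>{..<d}. u i \<in> I i \<and> E (u i) (v i)" ..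
  then have uI: "\<And>i. i < d \<Longrightarrow> u i \<in> I i" and uv: "\<And>i. i < d \<Longrightarrow> E (u i) (v i)"
    by auto
  have uV: "u i \<in> V" if "i < d" for i
    using uv[OF that] G by (auto simp: fin_graph_def)
  have u_notin: "u i \<notin> I j" if "i < d" "j < d" "j \<noteq> i" for i j
    using indep[OF that(2)] vI[OF that(1,2)] uv[OF that(1)] that(3) by blast
  have edge_iff: "E (u i) (v j) \<longleftrightarrow> i = j" if "i < d" "j < d" for i j
    using indep[OF that(1) uI[OF that(1)]] vI[OF that(2,1)] uv[OF that(1)] by blast
  have "inj_on u {..<d}"
    by (rule inj_onI) (metis lessThan_iff uI u_notin)
  moreover have "inj_on v {..<d}"
    by (rule inj_onI) (metis lessThan_iff vI)
  moreover have "u ` {..<d} \<inter> v ` {..<d} = {}"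
  proof (rule ccontr)
    assume "u ` {..<d} \<inter> v ` {..<d} \<noteq> {}"
    then obtain i j where ij: "i < d" "j < d" "u i = v j"
      by auto
    have "{0, 1, 2 :: nat} - {i, j} \<noteq> {}"
      by auto
    then obtain k where "k < d" "k \<noteq> i" "k \<noteq> j"
      using \<open>3 \<le> d\<close> by fastforce
    then have "v j \<in> I k" and "u i \<notin> I k"
      using vI[OF ij(2)] u_notin[OF ij(1)] by simp_all
    with ij(3) show False
      by simp
  qed
  ultimately show ?thesis
    using uV vV edge_iff unfolding bi_induced_matching_def by blast
qed

theorem lemma2p13:
  fixes V :: "'a set" and E :: "'a \<Rightarrow> 'a \<Rightarrow> bool"
  assumes "fin_graph V E"
    and "vc_dim (BG V E) (MIS V E) \<ge> 3"
  shows "vc_dim (BG V E) (MIS V E) \<le> nu_bi V E"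
proof -
  have "finite V"
    using assms(1) by (simp add: fin_graph_def)
  have "vc_dim (BG V E) (MIS V E) \<noteq> 0"
    using assms(2) by linarith
  then obtain S where S: "S \<subseteq> MIS V E" "finite S" "shatters (BG V E) S"
    and d: "card S = vc_dim (BG V E) (MIS V E)"
    by (rule vc_dim_attained[OF finite_MIS[OF \<open>finite V\<close>]])
  obtain I where I: "bij_betw I {..<card S} S"
    using ex_bij_betw_nat_finite[OF S(2)] by (auto simp: atLeast0LessThan)
  obtain v where vV: "\<And>i. i < card S \<Longrightarrow> v i \<in> V"
    and vI: "\<And>i j. i < card S \<Longrightarrow> j < card S \<Longrightarrow> v i \<in> I j \<longleftrightarrow> j \<noteq> i"
    using shatters_BG_co_singleton_vertices[OF S(3,1) I] by blast
  have mis: "max_indep_set V E (I i)" if "i < card S" for i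
    using I S(1) that by (auto simp: bij_betw_def MIS_def)
  have "3 \<le> card S"
    using assms(2) d by simp
  then obtain u where "bi_induced_matching V E (card S) u v"
    using bi_induced_matching_from_co_singleton_vertices[OF assms(1) _ mis vV vI] by blast
  from bi_induced_matching_le_nu_bi[OF \<open>finite V\<close> this] show ?thesis
    unfolding d .
qed

end
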